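(* Let $f:\mathbb{Z}^n\to\mathbb{R}\cup\{+\infty\}$ be a function satisfying condition (SSQM$^\natural$). A vector $x^*\in\mathrm{dom}\,f$ is a minimizer of $f$ if and only if $$f(x^*-\chi_i+\chi_j)\ge f(x^* )\qquad\text{for all } i,j\in N\cup\{0\}.$$
   Context: $N=\{1,\dots,n\}$. For $i\in N$, $\chi_i\in\{0,1\}^n$ is the characteristic vector of $i$, and $\chi_0=0$. $\mathrm{dom}\,f=\{x\in\mathbb{Z}^n\mid f(x)<+\infty\}$. For $x,y\in\mathbb{Z}^n$, $\mathrm{supp}^+(x-y)=\{i\in N\mid x(i)>y(i)\}$ and $\mathrm{supp}^-(x-y)=\{j\in N\mid x(j)<y(j)\}$. Condition (SSQM$^\natural$): for all $x,y\in\mathrm{dom}\,f$ and all $i\in\mathrm{supp}^+(x-y)$ there exists $j\in\mathrm{supp}^-(x-y)\cup\{0\}$ such that at least one of the following holds: (a) $f(x-\chi_i+\chi_j)<f(x)$; (b) $f(y+\chi_i-\chi_j)<f(y)$; (c) $f(x-\chi_i+\chi_j)=f(x)$ and $f(y+\chi_i-\chi_j)=f(y)$. A function satisfying (SSQM$^\natural$) is called semi-strictly quasi M$^\natural$-convex. *)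

theory Defs
  imports "HOL-Library.Extended_Real" "HOL-Library.Function_Algebras"
begin

text \<open>Integer vectors in Z^n are functions from a finite index type 'n (playing the role
of N = {1..n}) to int. Index 0 of N \<union> {0} is represented by None, i in N by Some i.\<close>

definition chi :: "'n option \<Rightarrow> ('n::finite \<Rightarrow> int)" where
  "chi k = (case k of None \<Rightarrow> (\<lambda>_. 0) | Some i \<Rightarrow> (\<lambda>l. if l = i then 1 else 0))"

definition dom_f :: "(('n::finite \<Rightarrow> int) \<Rightarrow> ereal) \<Rightarrow> ('n \<Rightarrow> int) set" where
  "dom_f f = {x. f x < \<infinity>}"

definition supp_pos :: "('n::finite \<Rightarrow> int) \<Rightarrow> ('n \<Rightarrow> int) \<Rightarrow> 'n set" where
  "supp_pos x y = {i. x i > y i}"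

definition supp_neg :: "('n::finite \<Rightarrow> int) \<Rightarrow> ('n \<Rightarrow> int) \<Rightarrow> 'n set" where
  "supp_neg x y = {j. x j < y j}"

definition SSQM_nat :: "(('n::finite \<Rightarrow> int) \<Rightarrow> ereal) \<Rightarrow> bool" where
  "SSQM_nat f \<longleftrightarrow>
    (\<forall>x \<in> dom_f f. \<forall>y \<in> dom_f f. \<forall>i \<in> supp_pos x y.
       \<exists>j \<in> Some ` supp_neg x y \<union> {None}.
          f (x - chi (Some i) + chi j) < f x
        \<or> f (y + chi (Some i) - chi j) < f y
        \<or> (f (x - chi (Some i) + chi j) = f x \<and> f (y + chi (Some i) - chi j) = f y))"

definition is_minimizer :: "(('n::finite \<Rightarrow> int) \<Rightarrow> ereal) \<Rightarrow> ('n \<Rightarrow> int) \<Rightarrow> bool" where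
  "is_minimizer f x \<longleftrightarrow> x \<in> dom_f f \<and> (\<forall>y. f x \<le> f y)"

end

theory Submission
  imports Defs
begin

text \<open>Suppose x* is locally minimal but some y has f y < f x*, and take such a y as close as
possible to x* in the l1-distance. Pick a coordinate where y and x* differ and apply
(SSQM-natural) to the pair (x*, y) or (y, x*), whichever puts that coordinate in supp+.
Local minimality of x* rules out alternative (a) resp. (b) and turns (c) into an
inequality, so the exchange step from y towards x* does not increase f. The resulting
point is strictly closer to x* and still has value below f x*, a contradiction.\<close>

lemma chi_apply [simp]:
  "chi (Some i) k = (if k = i then 1 else 0)"
  "chi None k = 0"
  by (simp_all add: chi_def)

definition l1_dist :: "('n::finite \<Rightarrow> int) \<Rightarrow> ('n \<Rightarrow> int) \<Rightarrow> nat" where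
  "l1_dist x y = (\<Sum>k\<in>UNIV. nat \<bar>x k - y k\<bar>)"

lemma l1_dist_less:
  fixes x y z :: "'n::finite \<Rightarrow> int"
  assumes "\<And>k. \<bar>z k - x k\<bar> \<le> \<bar>y k - x k\<bar>" and "\<bar>z i - x i\<bar> < \<bar>y i - x i\<bar>"
  shows "l1_dist z x < l1_dist y x"
  unfolding l1_dist_def
proof (rule sum_strict_mono_ex1)
  show "\<forall>k\<in>UNIV. nat \<bar>z k - x k\<bar> \<le> nat \<bar>y k - x k\<bar>"
    using assms(1) by (simp add: nat_mono)
  show "\<exists>k\<in>UNIV. nat \<bar>z k - x k\<bar> < nat \<bar>y k - x k\<bar>"
    using assms(2) by (intro bexI[of _ i]) auto
qed simp

lemma l1_dist_exchange_up:
  assumes "i \<in> supp_pos x y" and "j \<in> Some ` supp_neg x y \<union> {None}"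
  shows "l1_dist (y + chi (Some i) - chi j) x < l1_dist y x"
  using assms by (intro l1_dist_less[where i = i])
    (auto simp: supp_pos_def supp_neg_def split: option.splits)

lemma l1_dist_exchange_down:
  assumes "i \<in> supp_pos y x" and "j \<in> Some ` supp_neg y x \<union> {None}"
  shows "l1_dist (y - chi (Some i) + chi j) x < l1_dist y x"
  using assms by (intro l1_dist_less[where i = i])
    (auto simp: supp_pos_def supp_neg_def split: option.splits)

lemma SSQM_nat_exchange_le_left:
  assumes "SSQM_nat f" and "x \<in> dom_f f" and "y \<in> dom_f f" and "i \<in> supp_pos x y"
    and local_min: "\<forall>i j. f (x - chi i + chi j) \<ge> f x"
  obtains j where "j \<in> Some ` supp_neg x y \<union> {None}" and "f (y + chi (Some i) - chi j) \<le> f y"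
proof -
  from assms(1-4) obtain j where j: "j \<in> Some ` supp_neg x y \<union> {None}"
    and alt: "f (x - chi (Some i) + chi j) < f x
        \<or> f (y + chi (Some i) - chi j) < f y
        \<or> (f (x - chi (Some i) + chi j) = f x \<and> f (y + chi (Some i) - chi j) = f y)"
    unfolding SSQM_nat_def by blast
  have "f (x - chi (Some i) + chi j) \<ge> f x"
    using local_min by blast
  with alt have "f (y + chi (Some i) - chi j) \<le> f y"
    by auto
  with j show thesis by (rule that)
qed

lemma SSQM_nat_exchange_le_right:
  assumes "SSQM_nat f" and "x \<in> dom_f f" and "y \<in> dom_f f" and "i \<in> supp_pos x y"
    and local_min: "\<forall>i j. f (y - chi i + chi j) \<ge> f y"
  obtains j where "j \<in> Some ` supp_neg x y \<union> {None}" and "f (x - chi (Some i) + chi j) \<le> f x"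
proof -
  from assms(1-4) obtain j where j: "j \<in> Some ` supp_neg x y \<union> {None}"
    and alt: "f (x - chi (Some i) + chi j) < f x
        \<or> f (y + chi (Some i) - chi j) < f y
        \<or> (f (x - chi (Some i) + chi j) = f x \<and> f (y + chi (Some i) - chi j) = f y)"
    unfolding SSQM_nat_def by blast
  have "y + chi (Some i) - chi j = y - chi j + chi (Some i)"
    by (simp add: algebra_simps)
  with local_min have "f (y + chi (Some i) - chi j) \<ge> f y"
    by metis
  with alt have "f (x - chi (Some i) + chi j) \<le> f x"
    by auto
  with j show thesis by (rule that)
qed

lemma SSQM_nat_descent_to_local_min:
  assumes ssqm: "SSQM_nat f" and xdom: "x \<in> dom_f f" and ydom: "y \<in> dom_f f" and "y \<noteq> x"
    and local_min: "\<forall>i j. f (x - chi i + chi j) \<ge> f x"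
  obtains z where "f z \<le> f y" and "l1_dist z x < l1_dist y x"
proof -
  from \<open>y \<noteq> x\<close> obtain i where "y i < x i \<or> x i < y i"
    by (meson ext linorder_neqE)
  then consider "i \<in> supp_pos x y" | "i \<in> supp_pos y x"
    by (auto simp: supp_pos_def)
  then show thesis
  proof cases
    case 1
    obtain j where
      "j \<in> Some ` supp_neg x y \<union> {None}" "f (y + chi (Some i) - chi j) \<le> f y"
      by (rule SSQM_nat_exchange_le_left[OF ssqm xdom ydom 1 local_min])
    with 1 show thesis
      by (intro that) (auto intro: l1_dist_exchange_up)
  next
    case 2
    obtain j where
      "j \<in> Some ` supp_neg y x \<union> {None}" "f (y - chi (Some i) + chi j) \<le> f y"
      by (rule SSQM_nat_exchange_le_right[OF ssqm ydom xdom 2 local_min])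
    with 2 show thesis
      by (intro that) (auto intro: l1_dist_exchange_down)
  qed
qed

theorem theorem2p3:
  fixes f :: "('n::finite \<Rightarrow> int) \<Rightarrow> ereal"
  assumes real_or_inf: "\<forall>x. f x \<noteq> -\<infinity>"
    and ssqm: "SSQM_nat f"
    and xdom: "xs \<in> dom_f f"
  shows "is_minimizer f xs \<longleftrightarrow>
           (\<forall>i j :: 'n option. f (xs - chi i + chi j) \<ge> f xs)"
proof
  assume "is_minimizer f xs"
  then show "\<forall>i j. f (xs - chi i + chi j) \<ge> f xs"
    by (simp add: is_minimizer_def)
next
  assume local_min: "\<forall>i j. f (xs - chi i + chi j) \<ge> f xs"
  show "is_minimizer f xs"
  proof (rule ccontr)
    assume "\<not> is_minimizer f xs"
    then obtain y0 where "f y0 < f xs"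
      using xdom by (auto simp: is_minimizer_def not_le)
    then obtain y where fy: "f y < f xs"
      and closest: "\<And>z. f z < f xs \<Longrightarrow> l1_dist y xs \<le> l1_dist z xs"
      using ex_has_least_nat[of "\<lambda>y. f y < f xs" y0 "\<lambda>y. l1_dist y xs"] by blast
    have "y \<in> dom_f f" "y \<noteq> xs"
      using fy xdom by (auto simp: dom_f_def)
    with ssqm xdom local_min obtain z where "f z \<le> f y" "l1_dist z xs < l1_dist y xs"
      by (metis SSQM_nat_descent_to_local_min)
    with fy closest show False
      by (meson leD order.strict_trans1)
  qed
qed

end
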